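(* Let $f(z)=\prod_{j=1}^\infty(1+z/b_j)$, $z\in\mathbb{C}$, where $(b_j)_{j\ge1}$ is an increasing sequence of positive numbers with $\sum_{j\ge1}1/b_j<+\infty$. If $\lim_{t\to+\infty}\sigma_f^2(t)=+\infty$, then $f$ is Gaussian.
   Context: Such $f$ is an entire function with non-negative Taylor coefficients and $f(0)=1$. For $t>0$, $X_t$ is the random variable with $\mathbf{P}(X_t=n)=a_nt^n/f(t)$, $n\ge0$, where $f(z)=\sum a_nz^n$. Write $m_f(t)=\mathbf{E}(X_t)=\sum_j t/(b_j+t)$, $\sigma_f^2(t)=\mathbf{V}(X_t)=\sum_j tb_j/(b_j+t)^2$, and $\breve{X}_t=(X_t-m_f(t))/\sigma_f(t)$. $f$ is called Gaussian if $\breve{X}_t$ converges in distribution to a standard normal random variable as $t\to+\infty$. *)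

theory Defs
  imports "HOL-Analysis.Analysis" "HOL-Probability.Probability"
begin

text \<open>The entire function f(z) = prod_{j>=1} (1 + z / b_j) (indices shifted to start at 0).\<close>
definition prodf :: "(nat \<Rightarrow> real) \<Rightarrow> complex \<Rightarrow> complex" where
  "prodf b z = (\<Prod>j. 1 + z / complex_of_real (b j))"

definition taylor_coeff :: "(nat \<Rightarrow> real) \<Rightarrow> nat \<Rightarrow> real" where
  "taylor_coeff b n = Re ((deriv ^^ n) (prodf b) 0 / of_nat (fact n))"

definition fval :: "(nat \<Rightarrow> real) \<Rightarrow> real \<Rightarrow> real" where
  "fval b t = Re (prodf b (complex_of_real t))"

text \<open>P(X_t = n) = a_n t^n / f(t).\<close>
definition Xprob :: "(nat \<Rightarrow> real) \<Rightarrow> real \<Rightarrow> nat \<Rightarrow> real" where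
  "Xprob b t n = taylor_coeff b n * t ^ n / fval b t"

definition mean_f :: "(nat \<Rightarrow> real) \<Rightarrow> real \<Rightarrow> real" where
  "mean_f b t = (\<Sum>n. real n * Xprob b t n)"

definition var_f :: "(nat \<Rightarrow> real) \<Rightarrow> real \<Rightarrow> real" where
  "var_f b t = (\<Sum>n. (real n - mean_f b t)\<^sup>2 * Xprob b t n)"

definition normalized_cdf :: "(nat \<Rightarrow> real) \<Rightarrow> real \<Rightarrow> real \<Rightarrow> real" where
  "normalized_cdf b t x =
     (\<Sum>n. if (real n - mean_f b t) / sqrt (var_f b t) \<le> x then Xprob b t n else 0)"

definition std_normal_cdf :: "real \<Rightarrow> real" where
  "std_normal_cdf x = (LBINT y:{..x}. std_normal_density y)"

text \<open>f is Gaussian: the normalized X_t converges in distribution to N(0,1) as t \<rightarrow> +\<infinity>,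
  i.e. the distribution functions converge at every point (the limit CDF is continuous).\<close>
definition gaussian :: "(nat \<Rightarrow> real) \<Rightarrow> bool" where
  "gaussian b \<longleftrightarrow> (\<forall>x. ((\<lambda>t. normalized_cdf b t x) \<longlongrightarrow> std_normal_cdf x) at_top)"

end

(* With p_j(t) = t / (b_j + t), the generating function of X_t factorizes as
   E w^X_t = f(t w) / f(t) = prod_j (1 - p_j(t) + p_j(t) w),
   so X_t is distributed as a sum of independent Bernoulli variables with parameters p_j(t).
   Logarithmic differentiation of the product gives m_f(t) = sum_j p_j(t) and
   sigma_f^2(t) = sum_j p_j(t) (1 - p_j(t)).  The characteristic function of X_t - m_f(t) at s
   is the product of the centred Bernoulli factors exp(-i s p_j) (1 - p_j + p_j exp(i s)),
   each within p_j (1 - p_j) (|s|^3/6 + s^4/32) of exp(-s^2 p_j (1 - p_j) / 2).  Comparing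
   the two products factor by factor, the characteristic function of the normalized variable
   at u is within |u|^3 / (6 sigma_f(t)) + u^4 / (32 sigma_f^2(t)) of exp(-u^2/2), and the
   Levy continuity theorem turns this into convergence of the distribution functions. *)

theory Submission
  imports Defs "HOL-Complex_Analysis.Complex_Analysis"
begin

section \<open>Power series and logarithmic derivatives of entire functions\<close>

lemma sums_of_real_Re:
  assumes "(\<lambda>n. complex_of_real (g n)) sums s"
  shows "g sums Re s" and "complex_of_real (Re s) = s"
proof -
  show "g sums Re s" using sums_Re[OF assms] by simp
  have "(\<lambda>n. 0) sums Im s" using sums_Im[OF assms] by simp
  then have "Im s = 0" using sums_zero sums_unique2 by blast
  then show "complex_of_real (Re s) = s" by (simp add: complex_eq_iff)
qed

lemma higher_deriv_power_series_entire:
  assumes "g holomorphic_on UNIV"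
  shows "(\<lambda>n. of_nat (n choose k) * fact k * ((deriv ^^ n) g 0 / fact n) * w ^ n)
           sums (w ^ k * (deriv ^^ k) g w)"
proof -
  let ?c = "\<lambda>n. of_nat (n choose k) * fact k * ((deriv ^^ n) g 0 / fact n) * w ^ n"
  have "(\<lambda>n. (deriv ^^ n) ((deriv ^^ k) g) 0 / fact n * (w - 0) ^ n) sums (deriv ^^ k) g w"
    by (rule holomorphic_power_series[of _ _ "norm w + 1"])
       (auto intro!: holomorphic_higher_deriv holomorphic_on_subset[OF assms])
  then have "(\<lambda>n. w ^ k * ((deriv ^^ n) ((deriv ^^ k) g) 0 / fact n * w ^ n))
               sums (w ^ k * (deriv ^^ k) g w)"
    by (intro sums_mult) simp
  moreover have "w ^ k * ((deriv ^^ n) ((deriv ^^ k) g) 0 / fact n * w ^ n) = ?c (n + k)" for n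
  proof -
    have "(deriv ^^ n) ((deriv ^^ k) g) = (deriv ^^ (n + k)) g"
      by (simp add: funpow_add)
    moreover have "of_nat (n + k choose k) * fact k / (fact (n + k) :: complex) = 1 / fact n"
      by (simp add: binomial_fact field_simps)
    ultimately show ?thesis
      by (simp add: power_add field_simps)
  qed
  moreover have "(\<Sum>n<k. ?c n) = 0" by (intro sum.neutral) simp
  ultimately show ?thesis using sums_iff_shift[of ?c k] by simp
qed

lemma of_nat_choose_two: "of_nat (n choose 2) * 2 = real n * (real n - 1)"
  by (induction n) (auto simp: numeral_2_eq_2 algebra_simps)

lemma higher_deriv_mult_nonneg_Reals:
  assumes "g analytic_on {z}" "h analytic_on {z}"
    and "\<And>n. (deriv ^^ n) g z \<in> \<real>\<^sub>\<ge>\<^sub>0" "\<And>n. (deriv ^^ n) h z \<in> \<real>\<^sub>\<ge>\<^sub>0"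
  shows "(deriv ^^ n) (\<lambda>w. g w * h w) z \<in> \<real>\<^sub>\<ge>\<^sub>0"
proof -
  have "(\<Sum>i = 0..n. of_nat (n choose i) * (deriv ^^ i) g z * (deriv ^^ (n - i)) h z) \<in> \<real>\<^sub>\<ge>\<^sub>0"
    using assms(3,4) by (auto simp: complex_nonneg_Reals_iff Re_sum Im_sum intro!: sum_nonneg)
  then show ?thesis by (simp add: higher_deriv_mult_at[OF assms(1,2)])
qed

lemma deriv_logderiv:
  fixes g :: "complex \<Rightarrow> complex"
  assumes "g holomorphic_on UNIV" "g z \<noteq> 0"
  shows "deriv (\<lambda>w. deriv g w / g w) z = deriv (deriv g) z / g z - (deriv g z / g z)\<^sup>2"
proof -
  have "(deriv g has_field_derivative deriv (deriv g) z) (at z)"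
    and "(g has_field_derivative deriv g z) (at z)"
    using assms(1) holomorphic_deriv[OF assms(1)]
    by (auto intro!: holomorphic_derivI)
  from DERIV_divide[OF this assms(2)] show ?thesis
    using assms(2) by (intro DERIV_imp_deriv) (simp add: field_simps power2_eq_square)
qed

section \<open>Centred Bernoulli characteristic functions\<close>

lemma abs_exp_neg_sub_linear_le:
  fixes y :: real
  assumes "y \<ge> 0"
  shows "\<bar>exp (- y) - (1 - y)\<bar> \<le> y\<^sup>2 / 2"
proof (cases "y = 0")
  case False
  then have "- y < 0" using assms by simp
  then obtain \<xi> where \<xi>: "\<xi> < 0"
    "exp (- y) = (\<Sum>m<2. exp 0 / fact m * (- y) ^ m) + exp \<xi> / fact 2 * (- y)\<^sup>2"
    using Maclaurin_minus[of "- y" 2 "\<lambda>_. exp"] by (auto intro: DERIV_exp)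
  then have "\<bar>exp (- y) - (1 - y)\<bar> = exp \<xi> / 2 * y\<^sup>2"
    by (simp add: numeral_2_eq_2)
  also have "\<dots> \<le> 1 / 2 * y\<^sup>2"
    using \<xi>(1) by (intro mult_right_mono) auto
  finally show ?thesis by simp
qed simp

lemma norm_iexp_sub_quadratic_le:
  "cmod (iexp x - (1 + \<i> * complex_of_real x - complex_of_real (x\<^sup>2 / 2))) \<le> \<bar>x\<bar> ^ 3 / 6"
proof -
  have "(\<Sum>k \<le> 2. (\<i> * complex_of_real x) ^ k / fact k)
          = 1 + \<i> * complex_of_real x - complex_of_real (x\<^sup>2 / 2)"
    by (simp add: numeral_2_eq_2 power2_eq_square field_simps)
  then show ?thesis using iexp_approx1[of x 2] by (simp add: numeral_3_eq_3)
qed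

definition centered_bernoulli_char :: "real \<Rightarrow> real \<Rightarrow> complex" where
  "centered_bernoulli_char p s =
     iexp (- s * p) * (complex_of_real (1 - p) + complex_of_real p * iexp s)"

lemma norm_centered_bernoulli_char_le_1:
  assumes "0 \<le> p" "p \<le> 1"
  shows "cmod (centered_bernoulli_char p s) \<le> 1"
proof -
  have "cmod (complex_of_real (1 - p) + complex_of_real p * iexp s)
          \<le> cmod (complex_of_real (1 - p)) + cmod (complex_of_real p * iexp s)"
    by (rule norm_triangle_ineq)
  also have "\<dots> = 1"
    using assms by (simp add: norm_mult del: of_real_diff)
  finally show ?thesis by (simp add: centered_bernoulli_char_def norm_mult)
qed

lemma norm_centered_bernoulli_char_sub_quadratic_le:
  fixes p s :: real
  assumes "0 \<le> p" "p \<le> 1"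
  shows "cmod (centered_bernoulli_char p s - complex_of_real (1 - s\<^sup>2 * (p * (1 - p)) / 2))
           \<le> p * (1 - p) * \<bar>s\<bar> ^ 3 / 6"
proof -
  define q where "q = 1 - p"
  have q: "0 \<le> q" using assms by (simp add: q_def)
  define R where "R = (\<lambda>x. iexp x - (1 + \<i> * complex_of_real x - complex_of_real (x\<^sup>2 / 2)))"
  have "iexp (- s * p) * (complex_of_real q + complex_of_real p * iexp s)
          - complex_of_real (1 - s\<^sup>2 * (p * q) / 2)
        = complex_of_real q * R (- s * p) + complex_of_real p * R (s * q)"
  proof -
    have "iexp (- s * p) * iexp s = iexp (s * q)"
      by (simp add: q_def algebra_simps flip: exp_add)
    moreover have
      "complex_of_real q * (1 + \<i> * complex_of_real (- s * p) - complex_of_real ((- s * p)\<^sup>2 / 2))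
       + complex_of_real p * (1 + \<i> * complex_of_real (s * q) - complex_of_real ((s * q)\<^sup>2 / 2))
       = complex_of_real (1 - s\<^sup>2 * (p * q) / 2)"
      by (simp add: complex_eq_iff q_def power2_eq_square field_simps)
    ultimately show ?thesis
      by (simp add: R_def algebra_simps)
  qed
  also have "cmod \<dots> \<le> cmod (complex_of_real q * R (- s * p))
                          + cmod (complex_of_real p * R (s * q))"
    by (rule norm_triangle_ineq)
  also have "\<dots> = q * cmod (R (- s * p)) + p * cmod (R (s * q))"
    using assms(1) q by (simp add: norm_mult)
  also have "\<dots> \<le> q * (\<bar>- s * p\<bar> ^ 3 / 6) + p * (\<bar>s * q\<bar> ^ 3 / 6)"
    unfolding R_def using assms(1) q
    by (intro add_mono mult_left_mono norm_iexp_sub_quadratic_le) auto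
  also have "\<dots> = p * q * \<bar>s\<bar> ^ 3 * (p\<^sup>2 + q\<^sup>2) / 6"
    using assms(1) q by (simp add: abs_mult power_mult_distrib power2_eq_square power3_eq_cube
        algebra_simps)
  also have "\<dots> \<le> p * q * \<bar>s\<bar> ^ 3 / 6"
  proof -
    have "p\<^sup>2 + q\<^sup>2 = 1 - 2 * (p * q)" by (simp add: q_def power2_eq_square algebra_simps)
    then have "p\<^sup>2 + q\<^sup>2 \<le> 1" using assms by (simp add: q_def)
    then show ?thesis using assms by (simp add: q_def mult_left_le)
  qed
  finally show ?thesis by (simp add: centered_bernoulli_char_def q_def)
qed

lemma norm_centered_bernoulli_char_sub_gaussian_le:
  fixes p s :: real
  assumes "0 \<le> p" "p \<le> 1"
  shows "cmod (centered_bernoulli_char p s - complex_of_real (exp (- s\<^sup>2 * (p * (1 - p)) / 2)))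
           \<le> p * (1 - p) * (\<bar>s\<bar> ^ 3 / 6 + s ^ 4 / 32)"
proof -
  define y where "y = s\<^sup>2 * (p * (1 - p)) / 2"
  have "0 \<le> (p - 1 / 2)\<^sup>2" by simp
  then have pq: "0 \<le> p * (1 - p)" "p * (1 - p) \<le> 1 / 4"
    using assms by (simp, simp add: power2_eq_square algebra_simps)
  have "\<bar>exp (- y) - (1 - y)\<bar> \<le> y\<^sup>2 / 2"
    using pq by (intro abs_exp_neg_sub_linear_le) (simp add: y_def)
  also have "\<dots> = p * (1 - p) * (s ^ 4 / 8 * (p * (1 - p)))"
    by (simp add: y_def power2_eq_square power4_eq_xxxx)
  also have "\<dots> \<le> p * (1 - p) * (s ^ 4 / 8 * (1 / 4))"
    using pq by (intro mult_left_mono) auto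
  finally have exp_close: "cmod (complex_of_real (1 - y) - complex_of_real (exp (- y)))
                             \<le> p * (1 - p) * (s ^ 4 / 32)"
    by (simp add: abs_minus_commute flip: of_real_diff)
  have "cmod (centered_bernoulli_char p s - complex_of_real (1 - y)) \<le> p * (1 - p) * \<bar>s\<bar> ^ 3 / 6"
    unfolding y_def by (rule norm_centered_bernoulli_char_sub_quadratic_le[OF assms])
  from norm_diff_triangle_le[OF this exp_close]
  have "cmod (centered_bernoulli_char p s - complex_of_real (exp (- y)))
          \<le> p * (1 - p) * \<bar>s\<bar> ^ 3 / 6 + p * (1 - p) * (s ^ 4 / 32)" .
  moreover have "- s\<^sup>2 * (p * (1 - p)) / 2 = - y" by (simp add: y_def)
  ultimately show ?thesis by (simp add: distrib_left)
qed

section \<open>Laws of discrete random variables\<close>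

lemma levy_continuity_at_top:
  fixes M :: "real \<Rightarrow> real measure"
  assumes distr: "\<forall>\<^sub>F t in at_top. real_distribution (M t)" and "real_distribution N"
    and char_conv: "\<And>u. ((\<lambda>t. char (M t) u) \<longlongrightarrow> char N u) at_top"
    and "isCont (cdf N) x"
  shows "((\<lambda>t. cdf (M t) x) \<longlongrightarrow> cdf N x) at_top"
proof (rule tendsto_at_topI_sequentially)
  fix X :: "nat \<Rightarrow> real"
  assume X: "filterlim X at_top sequentially"
  define M' where "M' n = (if real_distribution (M (X n)) then M (X n) else N)" for n
  have eq: "\<forall>\<^sub>F n in sequentially. M' n = M (X n)"
    using eventually_compose_filterlim[OF distr X] by eventually_elim (simp add: M'_def)
  have "(\<lambda>n. char (M' n) u) \<longlonglongrightarrow> char N u" for u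
    using filterlim_compose[OF char_conv X] by (rule Lim_transform_eventually)
      (use eq in \<open>auto elim: eventually_mono\<close>)
  then have "weak_conv_m M' N"
    using assms(2) by (intro levy_continuity) (auto simp: M'_def)
  then have "(\<lambda>n. cdf (M' n) x) \<longlonglongrightarrow> cdf N x"
    using assms(4) by (simp add: weak_conv_m_def weak_conv_def)
  then show "(\<lambda>n. cdf (M (X n)) x) \<longlonglongrightarrow> cdf N x"
    by (rule Lim_transform_eventually) (use eq in \<open>auto elim: eventually_mono\<close>)
qed

definition discrete_distr :: "(nat \<Rightarrow> real) \<Rightarrow> (nat \<Rightarrow> real) \<Rightarrow> real measure" where
  "discrete_distr p g = distr (density (count_space UNIV) (\<lambda>n. ennreal (p n))) borel g"

context
  fixes p :: "nat \<Rightarrow> real"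
  assumes p_nonneg: "\<And>n. p n \<ge> 0" and p_sums: "p sums 1"
begin

lemma measure_density_nat:
    "measure (density (count_space UNIV) (\<lambda>n. ennreal (p n))) A = (\<Sum>n. p n * indicator A n)"
  and emeasure_density_nat:
    "emeasure (density (count_space UNIV) (\<lambda>n. ennreal (p n))) A
       = ennreal (\<Sum>n. p n * indicator A n)"
proof -
  have "summable p" using p_sums by (simp add: sums_iff)
  then have summable: "summable (\<lambda>n. p n * indicator A n)"
    by (rule summable_comparison_test'[where N = 0]) (simp add: p_nonneg indicator_def)
  have "emeasure (density (count_space UNIV) (\<lambda>n. ennreal (p n))) A
          = (\<integral>\<^sup>+ n. ennreal (p n * indicator A n) \<partial>count_space UNIV)"
    by (subst emeasure_density) (auto intro!: nn_integral_cong simp: indicator_def)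
  also have "\<dots> = ennreal (\<Sum>n. p n * indicator A n)"
    using summable p_nonneg
    by (simp add: nn_integral_count_space_nat suminf_ennreal2 indicator_def)
  finally show "emeasure (density (count_space UNIV) (\<lambda>n. ennreal (p n))) A
                  = ennreal (\<Sum>n. p n * indicator A n)" .
  moreover have "(\<Sum>n. p n * indicator A n) \<ge> 0"
    using p_nonneg by (intro suminf_nonneg summable) simp
  ultimately show "measure (density (count_space UNIV) (\<lambda>n. ennreal (p n))) A
                     = (\<Sum>n. p n * indicator A n)"
    by (simp add: measure_def)
qed

lemma real_distribution_discrete_distr: "real_distribution (discrete_distr p g)"
proof -
  have "prob_space (density (count_space UNIV) (\<lambda>n. ennreal (p n)))"
    using p_sums by (intro prob_spaceI) (simp add: emeasure_density_nat sums_iff)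
  then show ?thesis
    unfolding discrete_distr_def real_distribution_def real_distribution_axioms_def
    by (simp add: prob_space.prob_space_distr)
qed

lemma cdf_discrete_distr: "cdf (discrete_distr p g) x = (\<Sum>n. if g n \<le> x then p n else 0)"
proof -
  have "cdf (discrete_distr p g) x = (\<Sum>n. p n * indicator (g -` {..x}) n)"
    by (simp add: cdf_def discrete_distr_def measure_distr measure_density_nat)
  also have "\<dots> = (\<Sum>n. if g n \<le> x then p n else 0)"
    by (intro suminf_cong) (simp add: indicator_def)
  finally show ?thesis .
qed

lemma char_discrete_distr:
  "char (discrete_distr p g) u = (\<Sum>n. complex_of_real (p n) * iexp (u * g n))"
proof -
  have "char (discrete_distr p g) u = (\<integral>n. p n *\<^sub>R iexp (u * g n) \<partial>count_space UNIV)"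
    unfolding char_def discrete_distr_def using p_nonneg
    by (simp add: integral_distr integral_density)
  also have "\<dots> = (\<Sum>n. p n *\<^sub>R iexp (u * g n))"
    using p_sums p_nonneg
    by (intro integral_count_space_nat) (simp add: integrable_count_space_nat_iff sums_iff)
  finally show ?thesis by (simp add: scaleR_conv_of_real)
qed

end

lemma std_normal_cdf_eq_cdf: "std_normal_cdf x = cdf std_normal_distribution x"
proof -
  have "cdf std_normal_distribution x = integral\<^sup>L std_normal_distribution (indicator {..x})"
    by (simp add: cdf_def)
  also have "\<dots> = (\<integral>y. std_normal_density y * indicator {..x} y \<partial>lborel)"
    by (rule integral_real_density) (auto simp: normal_density_nonneg)
  finally show ?thesis
    by (simp add: std_normal_cdf_def set_lebesgue_integral_def mult.commute)
qed

lemma isCont_cdf_std_normal: "isCont (cdf std_normal_distribution) x"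
proof -
  have "AE y in lborel. y \<in> {x} \<longrightarrow> std_normal_density y = 0"
    using AE_lborel_singleton[of x] by eventually_elim auto
  then have "{x} \<in> null_sets std_normal_distribution"
    by (subst null_sets_density_iff) auto
  then show ?thesis
    by (simp add: finite_borel_measure.isCont_cdf[OF real_distribution.finite_borel_measure_M]
        real_dist_normal_dist measure_eq_0_null_sets)
qed

section \<open>Canonical products with negative zeros\<close>

locale genus_zero_product =
  fixes b :: "nat \<Rightarrow> real"
  assumes b_pos: "\<And>j. b j > 0"
    and summable_inverse_b: "summable (\<lambda>j. 1 / b j)"
begin

lemma b_nonzero [simp]: "b j \<noteq> 0"
  using b_pos[of j] by simp

lemma weierstrass_product_b: "weierstrass_product (\<lambda>j. - complex_of_real (b j)) (\<lambda>_. 0)"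
proof
  have "(\<lambda>j. inverse (b j)) \<longlonglongrightarrow> 0"
    using summable_LIMSEQ_zero[OF summable_inverse_b] by (simp add: inverse_eq_divide)
  then have "filterlim (\<lambda>j. inverse (b j)) (at_right 0) sequentially"
    using b_pos by (auto intro: tendsto_imp_filterlim_at_right)
  then have "filterlim (\<lambda>j. inverse (inverse (b j))) at_top sequentially"
    by (rule filterlim_compose[OF filterlim_inverse_at_top_right])
  then have "filterlim b at_top sequentially" by simp
  then show "filterlim (\<lambda>j. - complex_of_real (b j)) at_infinity sequentially"
    unfolding filterlim_at_infinity_conv_norm_at_top
    using b_pos by (simp add: filterlim_cong abs_of_pos less_imp_le)
  show "summable (\<lambda>j. (r / cmod (- complex_of_real (b j))) ^ Suc 0)" for r
    using summable_mult[OF summable_inverse_b, of r] b_pos by (simp add: abs_of_pos less_imp_le)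
qed simp

definition partial_prod :: "nat \<Rightarrow> complex \<Rightarrow> complex" where
  "partial_prod N z = (\<Prod>j<N. 1 + z / complex_of_real (b j))"

lemma prodf_eq_weierstrass_product:
  "prodf b = weierstrass_product.f (\<lambda>j. - complex_of_real (b j)) (\<lambda>_. 0)"
  by (simp add: weierstrass_product.f_def[OF weierstrass_product_b] prodf_def
      weierstrass_factor_def fun_eq_iff)

lemma holomorphic_prodf: "prodf b holomorphic_on A"
  unfolding prodf_eq_weierstrass_product
  by (rule weierstrass_product.holomorphic[OF weierstrass_product_b])

lemma prodf_eq_0_iff: "prodf b z = 0 \<longleftrightarrow> (\<exists>j. z = - complex_of_real (b j))"
  unfolding prodf_eq_weierstrass_product weierstrass_product.zero[OF weierstrass_product_b] by auto

lemma uniform_limit_partial_prod: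
  "R > 0 \<Longrightarrow> uniform_limit (cball 0 R) partial_prod (prodf b) sequentially"
  using weierstrass_product.uniform_limit[OF weierstrass_product_b, of R]
  unfolding prodf_eq_weierstrass_product partial_prod_def[abs_def]
  by (simp add: weierstrass_factor_def)

lemma partial_prod_tendsto: "(\<lambda>N. partial_prod N z) \<longlonglongrightarrow> prodf b z"
  by (rule tendsto_uniform_limitI[OF uniform_limit_partial_prod, of "norm z + 1"])
     (auto intro: add_nonneg_pos)

lemma analytic_partial_prod [analytic_intros]: "partial_prod N analytic_on A"
  unfolding partial_prod_def by (auto intro!: analytic_intros)

lemma higher_deriv_partial_prod_nonneg_Reals: "(deriv ^^ n) (partial_prod N) 0 \<in> \<real>\<^sub>\<ge>\<^sub>0"
proof (induction N arbitrary: n)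
  case 0
  then show ?case by (simp add: partial_prod_def)
next
  case (Suc N)
  have "(deriv ^^ k) (\<lambda>w. 1 + w / complex_of_real (b N)) 0 \<in> \<real>\<^sub>\<ge>\<^sub>0" for k
  proof -
    have "(deriv ^^ k) (\<lambda>w. 1 + complex_of_real (inverse (b N)) * w) 0
            = (if k = 0 then 1 else if k = 1 then complex_of_real (inverse (b N)) else 0)"
      by (subst higher_deriv_add_at) (auto intro!: analytic_intros)
    then show ?thesis
      using b_pos[of N] by (simp add: divide_inverse mult.commute)
  qed
  moreover have "partial_prod (Suc N) = (\<lambda>w. partial_prod N w * (1 + w / complex_of_real (b N)))"
    by (simp add: partial_prod_def fun_eq_iff)
  ultimately show ?case
    by (simp only:) (intro higher_deriv_mult_nonneg_Reals Suc.IH analytic_intros; simp)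
qed

lemma higher_deriv_prodf_nonneg_Reals: "(deriv ^^ n) (prodf b) 0 \<in> \<real>\<^sub>\<ge>\<^sub>0"
proof (rule Lim_in_closed_set[OF closed_nonneg_Reals_complex])
  show "(\<lambda>N. (deriv ^^ n) (partial_prod N) 0) \<longlonglongrightarrow> (deriv ^^ n) (prodf b) 0"
    by (rule higher_deriv_complex_uniform_limit
        [OF uniform_limit_on_subset[OF uniform_limit_partial_prod[of 1] ball_subset_cball]])
       (auto intro!: always_eventually analytic_imp_holomorphic analytic_intros)
qed (auto intro!: always_eventually higher_deriv_partial_prod_nonneg_Reals)

lemma taylor_coeff_nonneg: "taylor_coeff b n \<ge> 0"
  and of_real_taylor_coeff: "complex_of_real (taylor_coeff b n) = (deriv ^^ n) (prodf b) 0 / fact n"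
proof -
  obtain r where r: "(deriv ^^ n) (prodf b) 0 = complex_of_real r" "r \<ge> 0"
    using higher_deriv_prodf_nonneg_Reals[of n] by (auto elim: nonneg_Reals_cases)
  then have "taylor_coeff b n = r / fact n"
    unfolding taylor_coeff_def r(1)
    by (metis Re_complex_of_real of_nat_fact of_real_divide of_real_fact)
  then show "taylor_coeff b n \<ge> 0"
    and "complex_of_real (taylor_coeff b n) = (deriv ^^ n) (prodf b) 0 / fact n"
    using r by simp_all
qed

lemma prodf_power_series_higher_deriv:
  "(\<lambda>n. complex_of_real (of_nat (n choose k) * fact k * taylor_coeff b n) * w ^ n)
     sums (w ^ k * (deriv ^^ k) (prodf b) w)"
  using higher_deriv_power_series_entire[OF holomorphic_prodf, of k w]
  by (simp add: of_real_taylor_coeff)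

lemma prodf_power_series: "(\<lambda>n. complex_of_real (taylor_coeff b n) * w ^ n) sums prodf b w"
  using prodf_power_series_higher_deriv[of 0 w] by simp

lemma fval_sums: "(\<lambda>n. taylor_coeff b n * t ^ n) sums fval b t"
  and prodf_of_real: "prodf b (complex_of_real t) = complex_of_real (fval b t)"
proof -
  have "(\<lambda>n. complex_of_real (taylor_coeff b n * t ^ n)) sums prodf b (complex_of_real t)"
    using prodf_power_series[of "complex_of_real t"] by simp
  from sums_of_real_Re[OF this]
  show "(\<lambda>n. taylor_coeff b n * t ^ n) sums fval b t"
    and "prodf b (complex_of_real t) = complex_of_real (fval b t)"
    by (simp_all add: fval_def)
qed

lemma fval_pos:
  assumes "t \<ge> 0"
  shows "fval b t > 0"
proof -
  have "fval b t \<ge> 0"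
    using assms taylor_coeff_nonneg by (intro sums_le[OF _ sums_zero fval_sums]) simp
  moreover have "prodf b (complex_of_real t) \<noteq> 0"
  proof
    assume "prodf b (complex_of_real t) = 0"
    then obtain j where "complex_of_real t = complex_of_real (- b j)"
      by (auto simp: prodf_eq_0_iff)
    then show False
      using assms b_pos[of j] by (simp only: of_real_eq_iff)
  qed
  ultimately show ?thesis by (simp add: prodf_of_real)
qed

lemma of_real_b_plus_nonzero: "Re z \<ge> 0 \<Longrightarrow> complex_of_real (b j) + z \<noteq> 0"
  using b_pos[of j] by (auto simp: complex_eq_iff)

lemma logderiv_prodf_sums:
  assumes "Re z \<ge> 0"
  shows "(\<lambda>j. 1 / (complex_of_real (b j) + z)) sums (deriv (prodf b) z / prodf b z)"
proof -
  have "(\<lambda>j. deriv (\<lambda>w. 1 + w / complex_of_real (b j)) z / (1 + z / complex_of_real (b j)))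
          sums (deriv (prodf b) z / prodf b z)"
  proof (rule logderiv_prodinf_complex_uniform_limit)
    show "uniform_limit (ball 0 (norm z + 1)) (\<lambda>N w. \<Prod>j<N. 1 + w / complex_of_real (b j))
            (prodf b) sequentially"
      using uniform_limit_on_subset[OF uniform_limit_partial_prod ball_subset_cball]
      by (simp add: partial_prod_def[abs_def] add_nonneg_pos)
    show "prodf b z \<noteq> 0"
      using of_real_b_plus_nonzero[OF assms] by (auto simp: prodf_eq_0_iff add_eq_0_iff)
  qed (auto intro!: holomorphic_intros)
  moreover have "deriv (\<lambda>w. 1 + w / complex_of_real (b j)) z / (1 + z / complex_of_real (b j))
                   = 1 / (complex_of_real (b j) + z)" for j
  proof -
    have "deriv (\<lambda>w. 1 + w / complex_of_real (b j)) z = 1 / complex_of_real (b j)"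
      by (rule DERIV_imp_deriv) (auto intro!: derivative_eq_intros)
    then show ?thesis
      using of_real_b_plus_nonzero[OF assms, of j] by (simp add: field_simps)
  qed
  ultimately show ?thesis by simp
qed

lemma uniform_limit_logderiv_prodf:
  "uniform_limit {z. Re z > 0} (\<lambda>N z. \<Sum>j<N. 1 / (complex_of_real (b j) + z))
     (\<lambda>z. deriv (prodf b) z / prodf b z) sequentially"
proof -
  have "norm (1 / (complex_of_real (b j) + z)) \<le> 1 / b j" if "z \<in> {z. Re z > 0}" for j z
  proof -
    have "b j \<le> Re (complex_of_real (b j) + z)" using that by simp
    also have "\<dots> \<le> norm (complex_of_real (b j) + z)" by (rule complex_Re_le_cmod)
    finally show ?thesis using b_pos[of j] by (simp add: norm_divide frac_le)
  qed
  from Weierstrass_m_test[OF this summable_inverse_b]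
  show ?thesis
    by (rule uniform_limit_cong[THEN iffD1, rotated 2])
       (auto simp: sums_iff dest!: less_imp_le logderiv_prodf_sums)
qed

lemma deriv_logderiv_prodf_sums:
  assumes "Re z > 0"
  shows "(\<lambda>j. - 1 / (complex_of_real (b j) + z)\<^sup>2)
           sums deriv (\<lambda>w. deriv (prodf b) w / prodf b w) z"
proof -
  have "(\<lambda>N. deriv (\<lambda>w. \<Sum>j<N. 1 / (complex_of_real (b j) + w)) z)
          \<longlonglongrightarrow> deriv (\<lambda>w. deriv (prodf b) w / prodf b w) z"
    using assms of_real_b_plus_nonzero
    by (intro deriv_complex_uniform_limit[OF uniform_limit_logderiv_prodf])
       (auto intro!: always_eventually holomorphic_intros open_halfspace_Re_gt)
  moreover have "deriv (\<lambda>w. \<Sum>j<N. 1 / (complex_of_real (b j) + w)) z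
                   = (\<Sum>j<N. - 1 / (complex_of_real (b j) + z)\<^sup>2)" for N
    using assms of_real_b_plus_nonzero
    by (intro DERIV_imp_deriv) (auto intro!: derivative_eq_intros simp: power2_eq_square)
  ultimately show ?thesis by (simp add: sums_def)
qed

lemma Xprob_nonneg: "t \<ge> 0 \<Longrightarrow> Xprob b t n \<ge> 0"
  using fval_pos[of t] taylor_coeff_nonneg[of n] by (simp add: Xprob_def)

lemma Xprob_sums: "t \<ge> 0 \<Longrightarrow> Xprob b t sums 1"
  using sums_divide[OF fval_sums, of t "fval b t"] fval_pos[of t]
  by (simp add: Xprob_def[abs_def])

lemma factorial_moment_sums:
  assumes "t \<ge> 0"
  shows "(\<lambda>n. complex_of_real (of_nat (n choose k) * fact k * Xprob b t n))
           sums (complex_of_real t ^ k * (deriv ^^ k) (prodf b) t / prodf b t)"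
proof -
  have "(\<lambda>n. complex_of_real (of_nat (n choose k) * fact k * taylor_coeff b n)
            * complex_of_real t ^ n / complex_of_real (fval b t))
          sums (complex_of_real t ^ k * (deriv ^^ k) (prodf b) t / complex_of_real (fval b t))"
    by (intro sums_divide prodf_power_series_higher_deriv)
  then show ?thesis
    by (simp add: Xprob_def prodf_of_real mult.assoc)
qed

definition bernoulli_param :: "real \<Rightarrow> nat \<Rightarrow> real" where
  "bernoulli_param t j = t / (b j + t)"

lemma bernoulli_param_bounds: "t > 0 \<Longrightarrow> 0 < bernoulli_param t j \<and> bernoulli_param t j < 1"
  using b_pos[of j] by (simp add: bernoulli_param_def)

lemma bernoulli_param_sums:
  assumes "t > 0"
  shows "(\<lambda>j. complex_of_real (bernoulli_param t j))
           sums (complex_of_real t * deriv (prodf b) t / prodf b t)"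
  using sums_mult[OF logderiv_prodf_sums, of "complex_of_real t" "complex_of_real t"] assms
  by (simp add: bernoulli_param_def)

lemma bernoulli_param_sq_sums:
  assumes "t > 0"
  shows "(\<lambda>j. complex_of_real ((bernoulli_param t j)\<^sup>2))
           sums (- (complex_of_real t)\<^sup>2 * deriv (\<lambda>w. deriv (prodf b) w / prodf b w) t)"
  using assms
    sums_mult[OF deriv_logderiv_prodf_sums, of "complex_of_real t" "- (complex_of_real t)\<^sup>2"]
  by (simp add: bernoulli_param_def power_divide)

lemma mean_f_sums:
  assumes "t > 0"
  shows "(\<lambda>n. real n * Xprob b t n) sums mean_f b t" and "bernoulli_param t sums mean_f b t"
proof -
  have "(\<lambda>n. complex_of_real (real n * Xprob b t n))
          sums (complex_of_real t * deriv (prodf b) t / prodf b t)"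
    using factorial_moment_sums[of t 1] assms by simp
  from sums_of_real_Re(1)[OF this] sums_of_real_Re(1)[OF bernoulli_param_sums[OF assms]]
  show "(\<lambda>n. real n * Xprob b t n) sums mean_f b t" and "bernoulli_param t sums mean_f b t"
    by (auto simp: mean_f_def sums_iff)
qed

lemma second_factorial_moment_sums:
  assumes "t > 0"
  shows "(\<lambda>n. real n * (real n - 1) * Xprob b t n)
           sums ((mean_f b t)\<^sup>2 - (\<Sum>j. (bernoulli_param t j)\<^sup>2))"
proof -
  define S where "S = complex_of_real t * deriv (prodf b) t / prodf b t"
  define Q where "Q = - (complex_of_real t)\<^sup>2 * deriv (\<lambda>w. deriv (prodf b) w / prodf b w) t"
  have S: "S = complex_of_real (mean_f b t)"
    using sums_unique2[OF sums_of_real[OF mean_f_sums(2)[OF assms]] bernoulli_param_sums[OF assms]]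
    by (simp add: S_def)
  have "(\<lambda>j. (bernoulli_param t j)\<^sup>2) sums Re Q" "complex_of_real (Re Q) = Q"
    using sums_of_real_Re[OF bernoulli_param_sq_sums[OF assms]] unfolding Q_def by auto
  then have Q: "Q = complex_of_real (\<Sum>j. (bernoulli_param t j)\<^sup>2)"
    by (metis sums_unique)
  have "prodf b t \<noteq> 0"
    using fval_pos[of t] assms by (simp add: prodf_of_real)
  then have "complex_of_real t ^ 2 * deriv (deriv (prodf b)) t / prodf b t = S\<^sup>2 - Q"
    by (simp add: S_def Q_def deriv_logderiv[OF holomorphic_prodf] field_simps power2_eq_square)
  moreover have "(deriv ^^ 2) (prodf b) = deriv (deriv (prodf b))"
    by (simp add: numeral_2_eq_2)
  ultimately have "(\<lambda>n. complex_of_real (real n * (real n - 1) * Xprob b t n)) sums (S\<^sup>2 - Q)"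
    using factorial_moment_sums[of t 2] assms by (simp only: fact_2 of_nat_choose_two less_imp_le)
  then show ?thesis
    unfolding S Q by (simp only: sums_of_real_iff flip: of_real_power of_real_diff)
qed

lemma var_f_sums:
  assumes "t > 0"
  shows "(\<lambda>j. bernoulli_param t j * (1 - bernoulli_param t j)) sums var_f b t"
proof -
  define m where "m = mean_f b t"
  define q where "q = (\<Sum>j. (bernoulli_param t j)\<^sup>2)"
  have "(\<lambda>n. real n * (real n - 1) * Xprob b t n + (1 - 2 * m) * (real n * Xprob b t n)
             + m\<^sup>2 * Xprob b t n) sums ((m\<^sup>2 - q) + (1 - 2 * m) * m + m\<^sup>2 * 1)"
    unfolding m_def q_def using assms
    by (intro sums_add sums_mult second_factorial_moment_sums mean_f_sums Xprob_sums) auto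
  then have "(\<lambda>n. (real n - m)\<^sup>2 * Xprob b t n) sums (m - q)"
    by (simp add: power2_eq_square algebra_simps)
  then have "var_f b t = m - q"
    by (simp add: var_f_def m_def sums_iff)
  moreover have "(\<lambda>j. (bernoulli_param t j)\<^sup>2) sums q"
    using sums_of_real_Re(1)[OF bernoulli_param_sq_sums[OF assms]] by (simp add: q_def sums_iff)
  then have "(\<lambda>j. bernoulli_param t j - (bernoulli_param t j)\<^sup>2) sums (m - q)"
    using mean_f_sums(2)[OF assms] unfolding m_def by (intro sums_diff)
  ultimately have "(\<lambda>j. bernoulli_param t j - (bernoulli_param t j)\<^sup>2) sums var_f b t"
    by (simp only:)
  then show ?thesis by (simp add: algebra_simps power2_eq_square)
qed

lemma Xprob_power_series:
  assumes "t \<ge> 0"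
  shows "(\<lambda>n. complex_of_real (Xprob b t n) * w ^ n)
           sums (prodf b (complex_of_real t * w) / prodf b t)"
proof -
  have "(\<lambda>n. complex_of_real (taylor_coeff b n) * (complex_of_real t * w) ^ n
            / complex_of_real (fval b t))
          sums (prodf b (complex_of_real t * w) / complex_of_real (fval b t))"
    by (intro sums_divide prodf_power_series)
  then show ?thesis
    by (simp add: Xprob_def prodf_of_real power_mult_distrib field_simps)
qed

definition centered_char :: "real \<Rightarrow> real \<Rightarrow> complex" where
  "centered_char t s = (\<Sum>n. complex_of_real (Xprob b t n) * iexp (s * (real n - mean_f b t)))"

lemma centered_char_sums:
  assumes "t \<ge> 0"
  shows "(\<lambda>n. complex_of_real (Xprob b t n) * iexp (s * (real n - mean_f b t)))
           sums (iexp (- s * mean_f b t) * prodf b (complex_of_real t * iexp s) / prodf b t)"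
proof -
  have "iexp (s * (real n - mean_f b t)) = iexp (- s * mean_f b t) * iexp s ^ n" for n
    by (simp add: algebra_simps flip: exp_add exp_of_nat_mult)
  then show ?thesis
    using sums_mult[OF Xprob_power_series[OF assms], of "iexp (- s * mean_f b t)" "iexp s"]
    by (simp add: ac_simps)
qed

lemma bernoulli_factor:
  assumes "t > 0"
  shows "(1 + complex_of_real t * w / complex_of_real (b j))
             / (1 + complex_of_real t / complex_of_real (b j))
           = complex_of_real (1 - bernoulli_param t j) + complex_of_real (bernoulli_param t j) * w"
proof -
  define B T where "B = complex_of_real (b j)" and "T = complex_of_real t"
  have BT: "B \<noteq> 0" "B + T \<noteq> 0"
    using assms of_real_b_plus_nonzero[of T j] by (simp_all add: B_def T_def)
  have p: "complex_of_real (1 - bernoulli_param t j) = B / (B + T)"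
    "complex_of_real (bernoulli_param t j) = T / (B + T)"
    using assms b_pos[of j] by (simp_all add: B_def T_def bernoulli_param_def field_simps)
  have "1 + T * w / B = (B + T * w) / B" "1 + T / B = (B + T) / B"
    using BT by (simp_all add: field_simps)
  then have "(1 + T * w / B) / (1 + T / B) = (B + T * w) / (B + T)"
    using BT by simp
  also have "\<dots> = B / (B + T) + T / (B + T) * w"
    by (simp add: add_divide_distrib)
  finally show ?thesis
    unfolding B_def[symmetric] T_def[symmetric] p .
qed

lemma centered_bernoulli_prod_tendsto:
  assumes "t > 0"
  shows "(\<lambda>N. \<Prod>j<N. centered_bernoulli_char (bernoulli_param t j) s) \<longlonglongrightarrow> centered_char t s"
proof -
  have "prodf b (complex_of_real t) \<noteq> 0"
    using fval_pos[of t] assms by (simp add: prodf_of_real)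
  then have "(\<lambda>N. iexp (- s * (\<Sum>j<N. bernoulli_param t j))
              * partial_prod N (complex_of_real t * iexp s) / partial_prod N (complex_of_real t))
           \<longlonglongrightarrow> iexp (- s * mean_f b t) * prodf b (complex_of_real t * iexp s) / prodf b t"
    using mean_f_sums(2)[OF assms] unfolding sums_def
    by (intro tendsto_intros partial_prod_tendsto)
  moreover have "iexp (- s * (\<Sum>j<N. bernoulli_param t j))
              * partial_prod N (complex_of_real t * iexp s) / partial_prod N (complex_of_real t)
           = (\<Prod>j<N. centered_bernoulli_char (bernoulli_param t j) s)" for N
    using bernoulli_factor[OF assms, of "iexp s", symmetric]
    by (simp add: partial_prod_def centered_bernoulli_char_def sum_distrib_left exp_sum
        prod.distrib prod_dividef)
  moreover have "centered_char t s
                   = iexp (- s * mean_f b t) * prodf b (complex_of_real t * iexp s) / prodf b t"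
    using centered_char_sums[of t s] assms by (simp add: centered_char_def sums_iff)
  ultimately show ?thesis by simp
qed

lemma gaussian_prod_tendsto:
  assumes "t > 0"
  shows "(\<lambda>N. \<Prod>j<N. complex_of_real
             (exp (- s\<^sup>2 * (bernoulli_param t j * (1 - bernoulli_param t j)) / 2)))
           \<longlonglongrightarrow> complex_of_real (exp (- s\<^sup>2 * var_f b t / 2))"
proof -
  have "(\<lambda>N. complex_of_real
              (exp (- s\<^sup>2 * (\<Sum>j<N. bernoulli_param t j * (1 - bernoulli_param t j)) / 2)))
          \<longlonglongrightarrow> complex_of_real (exp (- s\<^sup>2 * var_f b t / 2))"
    using var_f_sums[OF assms] unfolding sums_def by (intro tendsto_intros) auto
  then show ?thesis
    by (simp add: sum_distrib_left sum_divide_distrib exp_sum flip: of_real_prod)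
qed

lemma norm_centered_char_sub_gaussian_le:
  assumes "t > 0"
  shows "cmod (centered_char t s - complex_of_real (exp (- s\<^sup>2 * var_f b t / 2)))
           \<le> var_f b t * (\<bar>s\<bar> ^ 3 / 6 + s ^ 4 / 32)"
proof -
  define p where "p = bernoulli_param t"
  define B where "B = \<bar>s\<bar> ^ 3 / 6 + s ^ 4 / 32"
  define z where "z j = centered_bernoulli_char (p j) s" for j
  define g where "g j = complex_of_real (exp (- s\<^sup>2 * (p j * (1 - p j)) / 2))" for j
  have p: "0 \<le> p j" "p j \<le> 1" for j
    using bernoulli_param_bounds[OF assms, of j] by (simp_all add: p_def)
  have var: "(\<lambda>j. p j * (1 - p j) * B) sums (var_f b t * B)"
    unfolding p_def by (intro sums_mult2 var_f_sums assms)
  have "cmod ((\<Prod>j<N. z j) - (\<Prod>j<N. g j)) \<le> var_f b t * B" for N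
  proof -
    have "cmod (z j) \<le> 1" for j
      unfolding z_def using p by (rule norm_centered_bernoulli_char_le_1)
    moreover have "cmod (g j) \<le> 1" for j
      using p[of j] by (simp add: g_def)
    ultimately have "cmod ((\<Prod>j<N. z j) - (\<Prod>j<N. g j)) \<le> (\<Sum>j<N. cmod (z j - g j))"
      by (intro norm_prod_diff)
    also have "\<dots> \<le> (\<Sum>j<N. p j * (1 - p j) * B)"
      unfolding z_def g_def B_def
      by (intro sum_mono norm_centered_bernoulli_char_sub_gaussian_le p)
    also have "\<dots> \<le> (\<Sum>j. p j * (1 - p j) * B)"
      using var p by (intro sum_le_suminf) (auto simp: sums_iff B_def)
    also have "\<dots> = var_f b t * B"
      using var by (simp add: sums_iff)
    finally show ?thesis .
  qed
  moreover have "(\<lambda>N. cmod ((\<Prod>j<N. z j) - (\<Prod>j<N. g j)))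
      \<longlonglongrightarrow> cmod (centered_char t s - complex_of_real (exp (- s\<^sup>2 * var_f b t / 2)))"
    unfolding z_def g_def p_def
    by (intro tendsto_intros centered_bernoulli_prod_tendsto gaussian_prod_tendsto assms)
  ultimately show ?thesis
    unfolding B_def
    by (intro tendsto_upperbound[where F = sequentially]) (auto intro: always_eventually)
qed

definition X_distr :: "real \<Rightarrow> real measure" where
  "X_distr t = discrete_distr (Xprob b t) (\<lambda>n. (real n - mean_f b t) / sqrt (var_f b t))"

lemma real_distribution_X_distr: "t \<ge> 0 \<Longrightarrow> real_distribution (X_distr t)"
  unfolding X_distr_def by (intro real_distribution_discrete_distr Xprob_nonneg Xprob_sums)

lemma cdf_X_distr: "t \<ge> 0 \<Longrightarrow> cdf (X_distr t) x = normalized_cdf b t x"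
  unfolding X_distr_def normalized_cdf_def
  by (intro cdf_discrete_distr Xprob_nonneg Xprob_sums)

lemma char_X_distr: "t \<ge> 0 \<Longrightarrow> char (X_distr t) u = centered_char t (u / sqrt (var_f b t))"
  unfolding X_distr_def centered_char_def
  by (subst char_discrete_distr) (auto intro: Xprob_nonneg Xprob_sums simp: ac_simps)

lemma char_X_distr_tendsto:
  assumes "filterlim (var_f b) at_top at_top"
  shows "((\<lambda>t. char (X_distr t) u) \<longlongrightarrow> char std_normal_distribution u) at_top"
proof -
  let ?\<sigma> = "\<lambda>t. sqrt (var_f b t)"
  have "\<forall>\<^sub>F t in at_top. cmod (char (X_distr t) u - complex_of_real (exp (- u\<^sup>2 / 2)))
          \<le> \<bar>u\<bar> ^ 3 / 6 * inverse (?\<sigma> t) + u ^ 4 / 32 * inverse (var_f b t)"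
    using eventually_gt_at_top[of 0] filterlim_at_top_dense[THEN iffD1, OF assms, rule_format, of 0]
  proof eventually_elim
    case (elim t)
    have \<sigma>: "?\<sigma> t > 0" "(?\<sigma> t)\<^sup>2 = var_f b t"
      using elim by simp_all
    then have "- (u / ?\<sigma> t)\<^sup>2 * var_f b t / 2 = - u\<^sup>2 / 2"
      by (simp add: power_divide)
    then have "cmod (char (X_distr t) u - complex_of_real (exp (- u\<^sup>2 / 2)))
          \<le> var_f b t * (\<bar>u / ?\<sigma> t\<bar> ^ 3 / 6 + (u / ?\<sigma> t) ^ 4 / 32)"
      using norm_centered_char_sub_gaussian_le[of t "u / ?\<sigma> t"] elim
      by (simp add: char_X_distr)
    also have "\<dots> = \<bar>u\<bar> ^ 3 / 6 * inverse (?\<sigma> t) + u ^ 4 / 32 * inverse (var_f b t)"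
      using \<sigma> by (simp add: abs_divide power_divide field_simps power2_eq_square
          power3_eq_cube power4_eq_xxxx del: real_sqrt_pow2 real_sqrt_mult_self)
    finally show ?case .
  qed
  moreover have "((\<lambda>t. \<bar>u\<bar> ^ 3 / 6 * inverse (?\<sigma> t) + u ^ 4 / 32 * inverse (var_f b t)) \<longlongrightarrow> 0) at_top"
    using filterlim_compose[OF sqrt_at_top assms] assms
    by (intro tendsto_add_zero tendsto_mult_right_zero tendsto_inverse_0_at_top)
  ultimately have "((\<lambda>t. char (X_distr t) u - complex_of_real (exp (- u\<^sup>2 / 2))) \<longlongrightarrow> 0) at_top"
    by (rule Lim_null_comparison)
  then have "((\<lambda>t. char (X_distr t) u) \<longlongrightarrow> complex_of_real (exp (- u\<^sup>2 / 2))) at_top"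
    by (rule LIM_zero_cancel)
  then show ?thesis by (simp add: char_std_normal_distribution)
qed

end

theorem proposition4p6:
  fixes b :: "nat \<Rightarrow> real"
  assumes "mono b"
    and "\<And>j. b j > 0"
    and "summable (\<lambda>j. 1 / b j)"
    and "filterlim (var_f b) at_top at_top"
  shows "gaussian b"
proof -
  interpret genus_zero_product b
    using assms(2,3) by unfold_locales
  have "\<forall>\<^sub>F t in at_top. real_distribution (X_distr t)"
    using eventually_ge_at_top[of 0] by eventually_elim (rule real_distribution_X_distr)
  then have cdf_tendsto: "((\<lambda>t. cdf (X_distr t) x) \<longlongrightarrow> cdf std_normal_distribution x) at_top" for x
    using real_dist_normal_dist char_X_distr_tendsto[OF assms(4)] isCont_cdf_std_normal
    by (rule levy_continuity_at_top)
  have cdf_eq: "\<forall>\<^sub>F t in at_top. cdf (X_distr t) x = normalized_cdf b t x" for x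
    using eventually_ge_at_top[of 0] by eventually_elim (rule cdf_X_distr)
  show ?thesis
    unfolding gaussian_def std_normal_cdf_eq_cdf
    using Lim_transform_eventually[OF cdf_tendsto cdf_eq] by blast
qed

end
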